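(* Consider the eigencurve learning-rate sequence $\{\eta_t\}$ described in the context, and let $\lambda_j$ be an eigenvalue of $H$. For integers $t\ge0$ define $$v_{t+1,j}=\sum_{k=0}^t\eta_k^2\prod_{i=k+1}^t(1-\eta_i\lambda_j)^2 .$$ Then for all integers $1\le t\le t'$ (within the range where the schedule is defined), $$v_{t',j}\le\max\left(v_{t,j},\,\eta_t/\lambda_j\right).$$
   Context: Let $H\in\mathbb{R}^{d\times d}$ be symmetric positive definite, with $\mu=\lambda_{\min}(H)$, $L=\lambda_{\max}(H)$ and $\kappa=L/\mu$. Let $I_{\max}=\log_2\kappa$, treated as an integer. Fix integers $0=t_0<\dots<t_{I_{\max}}=T$ with $\Delta_i=t_i-t_{i-1}$. The eigencurve learning rate is $$\eta_t=\frac{1}{L+\mu\sum_{j=1}^{i-1}\Delta_j2^{j-1}+2^{i-1}\mu(t-t_{i-1})}\quad\text{for }t\in[t_{i-1},t_i).$$ In particular $\eta_t\le1/L$ and $\eta_t$ is nonincreasing in $t$. *)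

theory Defs
  imports "HOL-Analysis.Analysis"
begin

definition mat_eigenvalue :: "real^'n^'n \<Rightarrow> real \<Rightarrow> bool" where
  "mat_eigenvalue H l \<longleftrightarrow> (\<exists>v. v \<noteq> 0 \<and> H *v v = l *\<^sub>R v)"

definition lambda_min :: "real^'n^'n \<Rightarrow> real" where
  "lambda_min H = Min {l. mat_eigenvalue H l}"

definition lambda_max :: "real^'n^'n \<Rightarrow> real" where
  "lambda_max H = Max {l. mat_eigenvalue H l}"

definition pos_def_mat :: "real^'n^'n \<Rightarrow> bool" where
  "pos_def_mat H \<longleftrightarrow> (\<forall>x. x \<noteq> 0 \<longrightarrow> x \<bullet> (H *v x) > 0)"

text \<open>Eigencurve schedule: for t in [tt (i-1), tt i), 1 <= i <= Imax;
  set to 0 outside [0, tt Imax) where the schedule is not defined.\<close>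
definition eigencurve_lr :: "real \<Rightarrow> real \<Rightarrow> (nat \<Rightarrow> nat) \<Rightarrow> nat \<Rightarrow> nat \<Rightarrow> real" where
  "eigencurve_lr L \<mu> tt Imax t =
    (if \<exists>i\<in>{1..Imax}. tt (i-1) \<le> t \<and> t < tt i then
       (let i = (THE i. i \<in> {1..Imax} \<and> tt (i-1) \<le> t \<and> t < tt i) in
        1 / (L + \<mu> * (\<Sum>j=1..i-1. real (tt j - tt (j-1)) * 2^(j-1))
               + 2^(i-1) * \<mu> * real (t - tt (i-1))))
     else 0)"

text \<open>v t = sum_{k=0}^{t-1} eta_k^2 prod_{i=k+1}^{t-1} (1 - eta_i lam)^2, so that
  v (t+1) matches the paper's v_{t+1,j}.\<close>
definition eig_v :: "(nat \<Rightarrow> real) \<Rightarrow> real \<Rightarrow> nat \<Rightarrow> real" where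
  "eig_v \<eta> lam t = (\<Sum>k<t. (\<eta> k)^2 * (\<Prod>i\<in>{k+1..<t}. (1 - \<eta> i * lam)^2))"

end

theory Submission
  imports Defs
begin

text \<open>One step of the recursion maps \<open>v\<close> to \<open>\<eta>\<^sup>2 + (1 - \<eta>\<lambda>)\<^sup>2 v\<close>, an affine map with slope
  \<open>(1 - \<eta>\<lambda>)\<^sup>2 < 1\<close> and fixed point \<open>\<eta> / (\<lambda>(2 - \<eta>\<lambda>)) \<le> \<eta>/\<lambda>\<close>. Hence a value below \<open>\<eta>/\<lambda>\<close>
  stays below it and a value above it decreases, so \<open>max v (\<eta>/\<lambda>)\<close> never grows. Along the
  eigencurve schedule \<open>\<eta>\<^sub>s \<le> 1/L \<le> 1/\<lambda>\<close> and \<open>\<eta>\<^sub>s\<close> is nonincreasing, so for \<open>s \<ge> t\<close> every step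
  keeps \<open>v\<^sub>s \<le> max v\<^sub>t (\<eta>\<^sub>t/\<lambda>)\<close>.\<close>

lemma mat_eigenvalue_pos:
  fixes H :: "real^'n^'n"
  assumes "pos_def_mat H" and "mat_eigenvalue H l"
  shows "0 < l"
proof -
  obtain v where v: "v \<noteq> 0" "H *v v = l *\<^sub>R v"
    using assms(2) unfolding mat_eigenvalue_def by blast
  have "0 < v \<bullet> (H *v v)" using assms(1) v(1) unfolding pos_def_mat_def by blast
  then have "0 < l * (v \<bullet> v)" using v(2) by simp
  moreover have "0 < v \<bullet> v" using v(1) by simp
  ultimately show ?thesis by (simp add: zero_less_mult_iff)
qed

lemma finite_mat_eigenvalues:
  fixes H :: "real^'n^'n"
  assumes "transpose H = H"
  shows "finite {l. mat_eigenvalue H l}"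
proof -
  define E where "E = {l. mat_eigenvalue H l}"
  define vec where "vec l = (SOME v. v \<noteq> 0 \<and> H *v v = l *\<^sub>R v)" for l
  have vec: "vec l \<noteq> 0 \<and> H *v vec l = l *\<^sub>R vec l" if "l \<in> E" for l
    unfolding vec_def by (rule someI_ex) (use that in \<open>simp add: E_def mat_eigenvalue_def\<close>)
  have "inj_on vec E"
  proof (rule inj_onI)
    fix a b assume ab: "a \<in> E" "b \<in> E" "vec a = vec b"
    then have "a *\<^sub>R vec a = b *\<^sub>R vec a" using vec by metis
    then show "a = b" using vec[OF ab(1)] by (simp add: scaleR_cancel_right)
  qed
  have "vec a \<bullet> vec b = 0" if "a \<in> E" "b \<in> E" "a \<noteq> b" for a b
  proof -
    have "vec a \<bullet> (H *v vec b) = (vec a v* H) \<bullet> vec b" by (simp add: dot_lmul_matrix)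
    also have "vec a v* H = H *v vec a" using assms by (metis vector_transpose_matrix)
    finally have "(H *v vec a) \<bullet> vec b = vec a \<bullet> (H *v vec b)" by simp
    then have "a * (vec a \<bullet> vec b) = b * (vec a \<bullet> vec b)"
      using vec[OF that(1)] vec[OF that(2)] by simp
    then show ?thesis using that(3) by simp
  qed
  then have "pairwise orthogonal (vec ` E)"
    unfolding pairwise_def orthogonal_def by auto
  moreover have "0 \<notin> vec ` E" using vec by auto
  ultimately have "finite (vec ` E)"
    by (intro independent_imp_finite pairwise_orthogonal_independent)
  then show ?thesis using \<open>inj_on vec E\<close> finite_imageD E_def by blast
qed

lemma mat_eigenvalue_le_lambda_max:
  fixes H :: "real^'n^'n"
  assumes "transpose H = H" and "mat_eigenvalue H l"
  shows "l \<le> lambda_max H"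
  unfolding lambda_max_def using finite_mat_eigenvalues[OF assms(1)] assms(2) by (simp add: Max_ge)

lemma lambda_min_pos:
  fixes H :: "real^'n^'n"
  assumes "transpose H = H" and "pos_def_mat H" and "mat_eigenvalue H l"
  shows "0 < lambda_min H"
proof -
  have "mat_eigenvalue H (lambda_min H)"
    unfolding lambda_min_def using finite_mat_eigenvalues[OF assms(1)] Min_in assms(3) by blast
  then show ?thesis using mat_eigenvalue_pos[OF assms(2)] by blast
qed

lemma eig_v_Suc:
  "eig_v \<eta> lam (Suc s) = (\<eta> s)^2 + (1 - \<eta> s * lam)^2 * eig_v \<eta> lam s"
  unfolding eig_v_def by (simp add: sum_distrib_left mult_ac)

lemma variance_step_le_max:
  fixes e lam v B c :: real
  assumes "0 < lam" "0 < e" "e * lam \<le> 1" "e \<le> c" "v \<le> max B (c / lam)"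
  shows "e^2 + (1 - e * lam)^2 * v \<le> max B (c / lam)"
proof -
  define x where "x = e * lam"
  have x: "0 < x" "x \<le> 1" using assms unfolding x_def by auto
  show ?thesis
  proof (cases "v \<le> e / lam")
    case True
    have "(1 - x)^2 * v \<le> (1 - x)^2 * (e / lam)" using True by (intro mult_left_mono) auto
    moreover have "e^2 + (1 - x)^2 * (e / lam) = e / lam - (e / lam) * (x * (1 - x))"
      unfolding x_def using assms(1) by (simp add: field_simps power2_eq_square)
    moreover have "0 \<le> (e / lam) * (x * (1 - x))" using x assms(1,2) by simp
    moreover have "e / lam \<le> c / lam" using assms by (simp add: divide_right_mono)
    ultimately show ?thesis unfolding x_def by linarith
  next
    case False
    have "e / lam * (x * (2 - x)) \<le> v * (x * (2 - x))"
      using False x by (intro mult_right_mono) auto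
    moreover have "e / lam * (x * (2 - x)) = e^2 * (2 - x)"
      unfolding x_def using assms(1) by (simp add: field_simps power2_eq_square)
    moreover have "e^2 \<le> e^2 * (2 - x)" using x by (simp add: mult_le_cancel_left1)
    moreover have "e^2 + (1 - x)^2 * v = v - v * (x * (2 - x)) + e^2"
      by (simp add: algebra_simps power2_eq_square)
    ultimately show ?thesis using assms(5) unfolding x_def by linarith
  qed
qed

lemma eig_v_le_max:
  assumes "0 < lam" and "t \<le> t'"
    and "\<And>s. t \<le> s \<Longrightarrow> s < t' \<Longrightarrow> 0 < \<eta> s \<and> \<eta> s * lam \<le> 1 \<and> \<eta> s \<le> \<eta> t"
  shows "eig_v \<eta> lam t' \<le> max (eig_v \<eta> lam t) (\<eta> t / lam)"
proof -
  have "eig_v \<eta> lam s \<le> max (eig_v \<eta> lam t) (\<eta> t / lam)" if "t \<le> s" "s \<le> t'" for s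
    using that
  proof (induction s rule: dec_induct)
    case base
    show ?case by simp
  next
    case (step s)
    then have "0 < \<eta> s" "\<eta> s * lam \<le> 1" "\<eta> s \<le> \<eta> t" using assms(3)[of s] by auto
    with assms(1) step show ?case
      unfolding eig_v_Suc by (intro variance_step_le_max) simp_all
  qed
  then show ?thesis using assms(2) by simp
qed

lemma breakpoints_mono:
  fixes tt :: "nat \<Rightarrow> nat"
  assumes "\<forall>i<Imax. tt i < tt (Suc i)" and "i \<le> j" and "j \<le> Imax"
  shows "tt i \<le> tt j"
  using assms(2,3)
proof (induction j rule: dec_induct)
  case base
  show ?case by simp
next
  case (step n)
  then have "tt i \<le> tt n" by simp
  also have "tt n < tt (Suc n)" using assms(1) step.prems by simp
  finally show ?case by simp
qed

definition eigencurve_denom :: "real \<Rightarrow> real \<Rightarrow> (nat \<Rightarrow> nat) \<Rightarrow> nat \<Rightarrow> nat \<Rightarrow> real" where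
  "eigencurve_denom L \<mu> tt i t = L + \<mu> * (\<Sum>j=1..i-1. real (tt j - tt (j-1)) * 2^(j-1))
     + 2^(i-1) * \<mu> * real (t - tt (i-1))"

lemma eigencurve_segment_unique:
  fixes tt :: "nat \<Rightarrow> nat"
  assumes mono: "\<forall>i<Imax. tt i < tt (Suc i)"
    and "i \<in> {1..Imax}" "tt (i-1) \<le> t" "t < tt i"
    and "j \<in> {1..Imax}" "tt (j-1) \<le> t" "t < tt j"
  shows "j = i"
proof (rule ccontr)
  assume "j \<noteq> i"
  then consider "i \<le> j - 1" | "j \<le> i - 1" using assms(2,5) by force
  then show False
  proof cases
    case 1
    then have "tt i \<le> tt (j - 1)" by (rule breakpoints_mono[OF mono]) (use assms(5) in auto)
    then show False using assms by linarith
  next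
    case 2
    then have "tt j \<le> tt (i - 1)" by (rule breakpoints_mono[OF mono]) (use assms(2) in auto)
    then show False using assms by linarith
  qed
qed

lemma eigencurve_lr_segment:
  fixes tt :: "nat \<Rightarrow> nat"
  assumes mono: "\<forall>i<Imax. tt i < tt (Suc i)"
    and seg: "i \<in> {1..Imax}" "tt (i-1) \<le> t" "t < tt i"
  shows "eigencurve_lr L \<mu> tt Imax t = 1 / eigencurve_denom L \<mu> tt i t"
proof -
  have "(THE j. j \<in> {1..Imax} \<and> tt (j-1) \<le> t \<and> t < tt j) = i"
  proof (rule the_equality)
    show "i \<in> {1..Imax} \<and> tt (i-1) \<le> t \<and> t < tt i" using seg by blast
  qed (use eigencurve_segment_unique[OF mono seg] in blast)
  moreover have "\<exists>j\<in>{1..Imax}. tt (j-1) \<le> t \<and> t < tt j" using seg by blast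
  ultimately show ?thesis unfolding eigencurve_lr_def eigencurve_denom_def Let_def by simp
qed

lemma eigencurve_segment_exists:
  fixes tt :: "nat \<Rightarrow> nat"
  assumes "tt 0 = 0" and "tt Imax = T" and "t < T"
  obtains i where "i \<in> {1..Imax}" "tt (i-1) \<le> t" "t < tt i"
proof -
  define i where "i = (LEAST i. t < tt i)"
  have "t < tt Imax" using assms by simp
  then have i: "t < tt i" "i \<le> Imax" unfolding i_def by (auto intro: LeastI Least_le)
  then have "1 \<le> i" using assms(1) by (cases i) auto
  moreover have "\<not> t < tt (i-1)"
    unfolding i_def by (rule not_less_Least) (use \<open>1 \<le> i\<close> i_def in auto)
  ultimately show ?thesis using i that by simp
qed

lemma eigencurve_denom_ge:
  assumes "0 \<le> \<mu>"
  shows "L \<le> eigencurve_denom L \<mu> tt i t"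
  unfolding eigencurve_denom_def using assms by (simp add: sum_nonneg)

lemma eigencurve_denom_mono:
  assumes "0 \<le> \<mu>" and "t \<le> t'"
  shows "eigencurve_denom L \<mu> tt i t \<le> eigencurve_denom L \<mu> tt i t'"
  unfolding eigencurve_denom_def using assms by (simp add: mult_left_mono)

lemma eigencurve_denom_breakpoint:
  assumes "1 \<le> i"
  shows "eigencurve_denom L \<mu> tt (Suc i) (tt i) = eigencurve_denom L \<mu> tt i (tt i)"
proof -
  let ?d = "\<lambda>j. real (tt j - tt (j-1)) * 2^(j-1)"
  obtain m where m: "i = Suc m" using assms by (cases i) auto
  have "(\<Sum>j=1..i. ?d j) = (\<Sum>j=1..i-1. ?d j) + ?d i"
    unfolding m by (simp add: sum.cl_ivl_Suc)
  then show ?thesis unfolding eigencurve_denom_def by (simp add: distrib_left mult_ac)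
qed

lemma eigencurve_lr_pos_le:
  fixes tt :: "nat \<Rightarrow> nat"
  assumes "tt 0 = 0" and "\<forall>i<Imax. tt i < tt (Suc i)" and "tt Imax = T" and "t < T"
    and "0 < L" and "0 \<le> \<mu>"
  shows "0 < eigencurve_lr L \<mu> tt Imax t" and "eigencurve_lr L \<mu> tt Imax t \<le> 1 / L"
proof -
  obtain i where seg: "i \<in> {1..Imax}" "tt (i-1) \<le> t" "t < tt i"
    using eigencurve_segment_exists[OF assms(1,3,4)] .
  have "L \<le> eigencurve_denom L \<mu> tt i t" using eigencurve_denom_ge[OF assms(6)] .
  then show "0 < eigencurve_lr L \<mu> tt Imax t" and "eigencurve_lr L \<mu> tt Imax t \<le> 1 / L"
    unfolding eigencurve_lr_segment[OF assms(2) seg] using assms(5) by (auto intro: frac_le)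
qed

lemma eigencurve_lr_Suc_le:
  fixes tt :: "nat \<Rightarrow> nat"
  assumes "tt 0 = 0" and mono: "\<forall>i<Imax. tt i < tt (Suc i)" and "tt Imax = T" and "Suc s < T"
    and "0 < L" and "0 \<le> \<mu>"
  shows "eigencurve_lr L \<mu> tt Imax (Suc s) \<le> eigencurve_lr L \<mu> tt Imax s"
proof -
  obtain i where seg: "i \<in> {1..Imax}" "tt (i-1) \<le> s" "s < tt i"
    using eigencurve_segment_exists[OF assms(1,3)] assms(4) by (metis Suc_lessD)
  obtain d where d: "eigencurve_lr L \<mu> tt Imax (Suc s) = 1 / d" "eigencurve_denom L \<mu> tt i s \<le> d"
  proof (cases "Suc s < tt i")
    case True
    then have "eigencurve_lr L \<mu> tt Imax (Suc s) = 1 / eigencurve_denom L \<mu> tt i (Suc s)"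
      using eigencurve_lr_segment[OF mono] seg by simp
    moreover have "eigencurve_denom L \<mu> tt i s \<le> eigencurve_denom L \<mu> tt i (Suc s)"
      using eigencurve_denom_mono[OF assms(6)] by simp
    ultimately show ?thesis using that by blast
  next
    case False
    then have boundary: "Suc s = tt i" using seg by simp
    then have "i < Imax" using seg assms(3,4) by (metis atLeastAtMost_iff le_neq_implies_less less_irrefl)
    then have "eigencurve_lr L \<mu> tt Imax (Suc s) = 1 / eigencurve_denom L \<mu> tt (Suc i) (tt i)"
      using eigencurve_lr_segment[OF mono, of "Suc i"] mono boundary by simp
    also have "\<dots> = 1 / eigencurve_denom L \<mu> tt i (tt i)"
      using eigencurve_denom_breakpoint seg(1) by simp
    finally show ?thesis
      using that eigencurve_denom_mono[OF assms(6)] seg(3) by simp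
  qed
  have "0 < eigencurve_denom L \<mu> tt i s"
    using eigencurve_denom_ge[OF assms(6)] assms(5) by (rule order.strict_trans2[rotated])
  then show ?thesis
    unfolding eigencurve_lr_segment[OF mono seg] d(1) using d(2) by (simp add: frac_le)
qed

lemma eigencurve_lr_antimono:
  fixes tt :: "nat \<Rightarrow> nat"
  assumes "tt 0 = 0" and "\<forall>i<Imax. tt i < tt (Suc i)" and "tt Imax = T"
    and "t \<le> s" and "s < T" and "0 < L" and "0 \<le> \<mu>"
  shows "eigencurve_lr L \<mu> tt Imax s \<le> eigencurve_lr L \<mu> tt Imax t"
  using assms(4,5)
proof (induction s rule: dec_induct)
  case base
  show ?case by simp
next
  case (step s)
  then show ?case
    using eigencurve_lr_Suc_le[OF assms(1-3) step.prems assms(6,7)] by simp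
qed

theorem lemma10:
  fixes H :: "real^'n^'n" and tt :: "nat \<Rightarrow> nat" and Imax T t t' :: nat and lam :: real
  assumes "transpose H = H" and "pos_def_mat H"
    and "lambda_max H / lambda_min H = 2 ^ Imax"
    and "tt 0 = 0" and "\<forall>i<Imax. tt i < tt (Suc i)" and "tt Imax = T"
    and "mat_eigenvalue H lam"
    and "1 \<le> t" and "t \<le> t'" and "t' \<le> T"
  shows "eig_v (eigencurve_lr (lambda_max H) (lambda_min H) tt Imax) lam t'
         \<le> max (eig_v (eigencurve_lr (lambda_max H) (lambda_min H) tt Imax) lam t)
                (eigencurve_lr (lambda_max H) (lambda_min H) tt Imax t / lam)"
proof -
  define L where "L = lambda_max H"
  define \<eta> where "\<eta> = eigencurve_lr L (lambda_min H) tt Imax"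
  have lam: "0 < lam" using mat_eigenvalue_pos[OF assms(2,7)] .
  have lam_le: "lam \<le> L" unfolding L_def using mat_eigenvalue_le_lambda_max[OF assms(1,7)] .
  have \<mu>: "0 \<le> lambda_min H" using lambda_min_pos[OF assms(1,2,7)] by simp
  have L: "0 < L" using lam lam_le by linarith
  have "0 < \<eta> s \<and> \<eta> s * lam \<le> 1 \<and> \<eta> s \<le> \<eta> t" if "t \<le> s" "s < t'" for s
  proof -
    have s: "s < T" using that assms(10) by simp
    have "0 < \<eta> s" "\<eta> s \<le> 1 / L"
      unfolding \<eta>_def using eigencurve_lr_pos_le[OF assms(4-6) s L \<mu>] by auto
    moreover have "\<eta> s * lam \<le> 1"
    proof -
      have "\<eta> s * lam \<le> 1 / L * lam" by (rule mult_right_mono) (use \<open>\<eta> s \<le> 1 / L\<close> lam in auto)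
      also have "\<dots> \<le> 1" using lam_le L by simp
      finally show ?thesis .
    qed
    moreover have "\<eta> s \<le> \<eta> t"
      unfolding \<eta>_def using eigencurve_lr_antimono[OF assms(4-6) that(1) s L \<mu>] .
    ultimately show ?thesis by blast
  qed
  then show ?thesis
    using eig_v_le_max[OF lam assms(9)] unfolding \<eta>_def L_def by simp
qed

end
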